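(* Let $A=(a_{ij})_{1\le i,j\le n}$ be a complex Nekrasov matrix and let $\epsilon_1,\dots,\epsilon_n$ be real numbers satisfying either the conditions (C1) or the conditions (C2) below. Define $w_i:=\sum_{j=1}^{i-1}|a_{ij}|\frac{\epsilon_j}{|a_{jj}|}$ and $p_i:=\sum_{j=i+1}^{n}|a_{ij}|\frac{|a_{jj}|-h_j(A)-\epsilon_j}{|a_{jj}|}$ for $i\in N=\{1,\dots,n\}$. Then $\epsilon_i-w_i+p_i>0$ for all $i$ and $$\|A^{-1}\|_\infty\le \frac{\max_{i\in N}\frac{h_i(A)+\epsilon_i}{|a_{ii}|}}{\min_{i\in N}(\epsilon_i-w_i+p_i)}.$$
   Context: For a complex $n\times n$ matrix $A=(a_{ij})$ with $a_{ii}\ne 0$ for all $i$, define recursively $h_1(A):=\sum_{j\ne 1}|a_{1j}|$ and $h_i(A):=\sum_{j=1}^{i-1}|a_{ij}|\frac{h_j(A)}{|a_{jj}|}+\sum_{j=i+1}^{n}|a_{ij}|$ for $i=2,\dots,n$. $A$ is a Nekrasov matrix if $|a_{ii}|>h_i(A)$ for all $i\in\{1,\dots,n\}$. $\|\cdot\|_\infty$ is the matrix norm induced by the vector max-norm (maximum absolute row sum). Conditions (C1): $\epsilon_1>0$, and for $i=2,\dots,n$: $0<\epsilon_i\le |a_{ii}|-h_i(A)$ and $\epsilon_i>\sum_{j=1}^{i-1}\frac{|a_{ij}|\epsilon_j}{|a_{jj}|}$. Conditions (C2): let $k$ be the smallest index such that $a_{kj}=0$ for all $j>k$; $\epsilon_i=0$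 for $i=1,\dots,k-1$, and for $i=k,\dots,n$: $0<\epsilon_i<|a_{ii}|-h_i(A)$ and $\epsilon_i>\sum_{j=k}^{i-1}\frac{|a_{ij}|\epsilon_j}{|a_{jj}|}$ (empty sum for $i=k$). *)

theory Defs
  imports Complex_Main
begin

text \<open>Matrices of size n are represented as functions nat => nat => complex,
  indices 0..n-1 (index i here corresponds to index i+1 of the paper).\<close>

function nekr_h :: "(nat \<Rightarrow> nat \<Rightarrow> complex) \<Rightarrow> nat \<Rightarrow> nat \<Rightarrow> real" where
  "nekr_h A n i =
     (\<Sum>j<i. cmod (A i j) * nekr_h A n j / cmod (A j j))
     + (\<Sum>j\<in>{i<..<n}. cmod (A i j))"
  by auto
termination
  by (relation "measure (\<lambda>(A, n, i). i)") auto

definition nekrasov :: "(nat \<Rightarrow> nat \<Rightarrow> complex) \<Rightarrow> nat \<Rightarrow> bool" where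
  "nekrasov A n \<longleftrightarrow> (\<forall>i<n. A i i \<noteq> 0 \<and> cmod (A i i) > nekr_h A n i)"

definition inf_norm :: "(nat \<Rightarrow> nat \<Rightarrow> complex) \<Rightarrow> nat \<Rightarrow> real" where
  "inf_norm B n = Max ((\<lambda>i. \<Sum>j<n. cmod (B i j)) ` {..<n})"

definition is_inverse :: "(nat \<Rightarrow> nat \<Rightarrow> complex) \<Rightarrow> (nat \<Rightarrow> nat \<Rightarrow> complex) \<Rightarrow> nat \<Rightarrow> bool" where
  "is_inverse A B n \<longleftrightarrow>
     (\<forall>i<n. \<forall>j<n. (\<Sum>k<n. A i k * B k j) = (if i = j then 1 else 0)) \<and>
     (\<forall>i<n. \<forall>j<n. (\<Sum>k<n. B i k * A k j) = (if i = j then 1 else 0))"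

definition cond_C1 :: "(nat \<Rightarrow> nat \<Rightarrow> complex) \<Rightarrow> nat \<Rightarrow> (nat \<Rightarrow> real) \<Rightarrow> bool" where
  "cond_C1 A n \<epsilon> \<longleftrightarrow> \<epsilon> 0 > 0 \<and>
     (\<forall>i. 1 \<le> i \<and> i < n \<longrightarrow>
        0 < \<epsilon> i \<and> \<epsilon> i \<le> cmod (A i i) - nekr_h A n i \<and>
        \<epsilon> i > (\<Sum>j<i. cmod (A i j) * \<epsilon> j / cmod (A j j)))"

definition c2_index :: "(nat \<Rightarrow> nat \<Rightarrow> complex) \<Rightarrow> nat \<Rightarrow> nat" where
  "c2_index A n = (LEAST k. \<forall>j. k < j \<and> j < n \<longrightarrow> A k j = 0)"

definition cond_C2 :: "(nat \<Rightarrow> nat \<Rightarrow> complex) \<Rightarrow> nat \<Rightarrow> (nat \<Rightarrow> real) \<Rightarrow> bool" where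
  "cond_C2 A n \<epsilon> \<longleftrightarrow> (let k = c2_index A n in
     (\<forall>i<k. \<epsilon> i = 0) \<and>
     (\<forall>i. k \<le> i \<and> i < n \<longrightarrow>
        0 < \<epsilon> i \<and> \<epsilon> i < cmod (A i i) - nekr_h A n i \<and>
        \<epsilon> i > (\<Sum>j\<in>{k..<i}. cmod (A i j) * \<epsilon> j / cmod (A j j))))"

definition nekr_w :: "(nat \<Rightarrow> nat \<Rightarrow> complex) \<Rightarrow> nat \<Rightarrow> (nat \<Rightarrow> real) \<Rightarrow> nat \<Rightarrow> real" where
  "nekr_w A n \<epsilon> i = (\<Sum>j<i. cmod (A i j) * \<epsilon> j / cmod (A j j))"

definition nekr_p :: "(nat \<Rightarrow> nat \<Rightarrow> complex) \<Rightarrow> nat \<Rightarrow> (nat \<Rightarrow> real) \<Rightarrow> nat \<Rightarrow> real" where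
  "nekr_p A n \<epsilon> i = (\<Sum>j\<in>{i<..<n}.
      cmod (A i j) * (cmod (A j j) - nekr_h A n j - \<epsilon> j) / cmod (A j j))"

end

theory Submission
  imports Defs "Jordan_Normal_Form.Determinant"
begin

text \<open>Scale the columns of \<open>A\<close> by \<open>d\<^sub>j = (h\<^sub>j(A) + \<epsilon>\<^sub>j) / |a\<^sub>j\<^sub>j|\<close>. Unfolding the recursion
  for \<open>h\<^sub>i(A)\<close>, the \<open>i\<close>-th row of \<open>A D\<close> is diagonally dominant with margin exactly
  \<open>\<epsilon>\<^sub>i - w\<^sub>i + p\<^sub>i\<close>, and (C1) or (C2) make all these margins and all \<open>d\<^sub>j\<close> positive.
  For a column scaling with positive margins, a solution of \<open>A x = z\<close> satisfies
  \<open>|x\<^sub>j| \<le> d\<^sub>j \<parallel>z\<parallel>\<^sub>\<infinity> / min margin\<close>: look at a row where \<open>|x\<^sub>j| / d\<^sub>j\<close> is maximal.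
  This makes \<open>A\<close> injective, hence invertible, and applied to \<open>x = A\<^sup>-\<^sup>1 z\<close> with \<open>z\<close> the
  conjugate sign vector of a row of \<open>A\<^sup>-\<^sup>1\<close> it bounds the row sums of \<open>A\<^sup>-\<^sup>1\<close>.\<close>

definition dd_margin :: "(nat \<Rightarrow> nat \<Rightarrow> complex) \<Rightarrow> nat \<Rightarrow> (nat \<Rightarrow> real) \<Rightarrow> nat \<Rightarrow> real" where
  "dd_margin A n d i = cmod (A i i) * d i - (\<Sum>j\<in>{..<n}-{i}. cmod (A i j) * d j)"

lemma scaled_dd_solution_bound:
  fixes A :: "nat \<Rightarrow> nat \<Rightarrow> complex" and d :: "nat \<Rightarrow> real" and x z :: "nat \<Rightarrow> complex"
  assumes d_pos: "\<forall>i<n. d i > 0" and b_pos: "b > 0"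
    and margin: "\<forall>i<n. b \<le> dd_margin A n d i"
    and solution: "\<forall>i<n. (\<Sum>k<n. A i k * x k) = z i"
    and z_bound: "\<forall>i<n. cmod (z i) \<le> c"
    and j: "j < n"
  shows "cmod (x j) \<le> d j * (c / b)"
proof -
  define t where "t = Max ((\<lambda>i. cmod (x i) / d i) ` {..<n})"
  have "t \<in> (\<lambda>i. cmod (x i) / d i) ` {..<n}"
    unfolding t_def using j by (intro Max_in) auto
  then obtain i where i: "i < n" and t_i: "t = cmod (x i) / d i" by auto
  have x_le: "cmod (x l) \<le> d l * t" if "l < n" for l
  proof -
    have "cmod (x l) / d l \<le> t" unfolding t_def using that by (intro Max_ge) auto
    thus ?thesis using d_pos that by (simp add: pos_divide_le_eq mult.commute)
  qed
  have d_i: "d i > 0" using d_pos i by simp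
  then have t_nonneg: "t \<ge> 0" and x_i: "cmod (x i) = d i * t"
    using t_i by simp_all
  have off_diag: "cmod (\<Sum>l\<in>{..<n}-{i}. A i l * x l) \<le> (\<Sum>l\<in>{..<n}-{i}. cmod (A i l) * d l) * t"
  proof -
    have "cmod (\<Sum>l\<in>{..<n}-{i}. A i l * x l) \<le> (\<Sum>l\<in>{..<n}-{i}. cmod (A i l * x l))"
      by (rule norm_sum)
    also have "\<dots> \<le> (\<Sum>l\<in>{..<n}-{i}. cmod (A i l) * d l * t)"
      by (intro sum_mono) (auto simp: norm_mult mult.assoc intro!: mult_left_mono x_le)
    finally show ?thesis by (simp add: sum_distrib_right)
  qed
  have "z i = A i i * x i + (\<Sum>l\<in>{..<n}-{i}. A i l * x l)"
    using solution i by (simp add: sum.remove[of "{..<n}" i])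
  then have "cmod (A i i * x i) - cmod (\<Sum>l\<in>{..<n}-{i}. A i l * x l) \<le> cmod (z i)"
    by (metis norm_diff_ineq)
  moreover have "cmod (A i i * x i) = cmod (A i i) * d i * t" by (simp add: norm_mult x_i)
  moreover have "cmod (z i) \<le> c" using z_bound i by simp
  ultimately have "dd_margin A n d i * t \<le> c"
    using off_diag unfolding dd_margin_def left_diff_distrib by linarith
  moreover have "b * t \<le> dd_margin A n d i * t"
    using margin i t_nonneg by (intro mult_right_mono) auto
  ultimately have "t \<le> c / b" using b_pos by (simp add: pos_le_divide_eq mult.commute)
  then have "d j * t \<le> d j * (c / b)" using d_pos j by (intro mult_left_mono) auto
  with x_le[OF j] show ?thesis by linarith
qed

lemma is_inverse_exists_if_injective:
  fixes A :: "nat \<Rightarrow> nat \<Rightarrow> complex"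
  assumes inj: "\<And>x. \<forall>i<n. (\<Sum>k<n. A i k * x k) = 0 \<Longrightarrow> \<forall>i<n. x i = 0"
  shows "\<exists>B. is_inverse A B n"
proof -
  define M where "M = mat n n (\<lambda>(i,j). A i j)"
  have M: "M \<in> carrier_mat n n" unfolding M_def by simp
  have "det M \<noteq> 0"
  proof
    assume "det M = 0"
    then obtain v where v: "v \<in> carrier_vec n" "v \<noteq> 0\<^sub>v n" "M *\<^sub>v v = 0\<^sub>v n"
      using det_0_iff_vec_prod_zero_field[OF M] by auto
    have "(\<Sum>k<n. A i k * v $ k) = 0" if i: "i < n" for i
    proof -
      have "(M *\<^sub>v v) $ i = 0" using v(3) i by simp
      thus ?thesis using i v(1) by (simp add: M_def mult_mat_vec_def scalar_prod_def lessThan_atLeast0)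
    qed
    then have "v = 0\<^sub>v n" using inj v(1) by (intro eq_vecI) auto
    with v(2) show False by simp
  qed
  from det_non_zero_imp_unit[OF M this, of "()"]
  obtain P where P: "P \<in> carrier_mat n n" "P * M = 1\<^sub>m n" "M * P = 1\<^sub>m n"
    unfolding Units_def ring_mat_def by auto
  have "is_inverse A (\<lambda>i j. P $$ (i, j)) n" unfolding is_inverse_def
  proof (intro conjI allI impI)
    fix i j assume i: "i < n" and j: "j < n"
    have "(M * P) $$ (i,j) = 1\<^sub>m n $$ (i,j)" using P by simp
    thus "(\<Sum>k<n. A i k * P $$ (k, j)) = (if i = j then 1 else 0)"
      using i j P(1) by (simp add: M_def scalar_prod_def lessThan_atLeast0 row_def col_def)
    have "(P * M) $$ (i,j) = 1\<^sub>m n $$ (i,j)" using P by simp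
    thus "(\<Sum>k<n. P $$ (i, k) * A k j) = (if i = j then 1 else 0)"
      using i j P(1) by (simp add: M_def scalar_prod_def lessThan_atLeast0 row_def col_def)
  qed
  then show ?thesis by blast
qed

lemma is_inverse_mult_vec:
  fixes A B :: "nat \<Rightarrow> nat \<Rightarrow> complex"
  assumes "is_inverse A B n" and "j < n"
  shows "(\<Sum>m<n. A j m * (\<Sum>k<n. B m k * z k)) = z j"
proof -
  have "(\<Sum>m<n. A j m * (\<Sum>k<n. B m k * z k)) = (\<Sum>m<n. \<Sum>k<n. A j m * (B m k * z k))"
    by (simp add: sum_distrib_left)
  also have "\<dots> = (\<Sum>k<n. (\<Sum>m<n. A j m * B m k) * z k)"
    by (subst sum.swap) (simp add: sum_distrib_right mult.assoc)
  also have "\<dots> = (\<Sum>k<n. if j = k then z k else 0)"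
    using assms unfolding is_inverse_def by (intro sum.cong) auto
  also have "\<dots> = z j" using assms(2) by simp
  finally show ?thesis .
qed

lemma scaled_dd_inverse_row_sum_bound:
  fixes A B :: "nat \<Rightarrow> nat \<Rightarrow> complex" and d :: "nat \<Rightarrow> real"
  assumes B: "is_inverse A B n" and d_pos: "\<forall>i<n. d i > 0" and b_pos: "b > 0"
    and margin: "\<forall>i<n. b \<le> dd_margin A n d i" and i: "i < n"
  shows "(\<Sum>k<n. cmod (B i k)) \<le> d i / b"
proof -
  define z where "z k = cnj (B i k) / of_real (cmod (B i k))" for k
  define x where "x l = (\<Sum>k<n. B l k * z k)" for l
  have "cmod (z k) \<le> 1" for k
    unfolding z_def by (cases "B i k = 0") (auto simp: norm_divide)
  moreover have "\<forall>j<n. (\<Sum>m<n. A j m * x m) = z j"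
    unfolding x_def using is_inverse_mult_vec[OF B] by blast
  ultimately have "cmod (x i) \<le> d i * (1 / b)"
    using scaled_dd_solution_bound[OF d_pos b_pos margin _ _ i] by blast
  moreover have "B i k * z k = of_real (cmod (B i k))" for k
    using complex_norm_square[of "B i k"]
    by (cases "B i k = 0") (auto simp: z_def power2_eq_square field_simps)
  then have "x i = of_real (\<Sum>k<n. cmod (B i k))"
    unfolding x_def of_real_sum by simp
  then have "cmod (x i) = (\<Sum>k<n. cmod (B i k))"
    by (metis norm_of_real abs_of_nonneg sum_nonneg norm_ge_zero)
  ultimately show ?thesis by simp
qed

lemma scaled_dd_inverse_inf_norm_bound:
  fixes A :: "nat \<Rightarrow> nat \<Rightarrow> complex" and d :: "nat \<Rightarrow> real"
  assumes n: "0 < n" and d_pos: "\<forall>i<n. d i > 0" and margin_pos: "\<forall>i<n. 0 < dd_margin A n d i"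
  shows "\<exists>B. is_inverse A B n \<and>
           inf_norm B n \<le> Max (d ` {..<n}) / Min (dd_margin A n d ` {..<n})"
proof -
  define b where "b = Min (dd_margin A n d ` {..<n})"
  have b_pos: "b > 0" unfolding b_def using n margin_pos by (subst Min_gr_iff) auto
  have margin: "\<forall>i<n. b \<le> dd_margin A n d i" unfolding b_def by auto
  have "\<forall>i<n. x i = 0" if "\<forall>i<n. (\<Sum>k<n. A i k * x k) = 0" for x
    using scaled_dd_solution_bound[OF d_pos b_pos margin that, of 0] by auto
  then obtain B where B: "is_inverse A B n" using is_inverse_exists_if_injective by blast
  have "(\<Sum>k<n. cmod (B i k)) \<le> Max (d ` {..<n}) / b" if i: "i < n" for i
  proof -
    have "d i / b \<le> Max (d ` {..<n}) / b" using b_pos i by (intro divide_right_mono Max_ge) auto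
    with scaled_dd_inverse_row_sum_bound[OF B d_pos b_pos margin i] show ?thesis by linarith
  qed
  then have "inf_norm B n \<le> Max (d ` {..<n}) / b"
    unfolding inf_norm_def using n by (subst Max_le_iff) auto
  with B show ?thesis unfolding b_def by blast
qed

declare nekr_h.simps [simp del]

lemma nekr_h_nonneg: "0 \<le> nekr_h A n i"
proof (induction i rule: less_induct)
  case (less i)
  show ?case
    by (subst nekr_h.simps) (auto intro!: sum_nonneg add_nonneg_nonneg divide_nonneg_nonneg mult_nonneg_nonneg less)
qed

lemma nekr_h_pos_if_upper_entry_nonzero:
  assumes "i < j" "j < n" "A i j \<noteq> 0"
  shows "0 < nekr_h A n i"
proof -
  have "0 < (\<Sum>l\<in>{i<..<n}. cmod (A i l))"
    using assms by (intro sum_pos2[of _ j]) auto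
  moreover have "0 \<le> (\<Sum>l<i. cmod (A i l) * nekr_h A n l / cmod (A l l))"
    by (auto intro!: sum_nonneg divide_nonneg_nonneg mult_nonneg_nonneg nekr_h_nonneg)
  ultimately show ?thesis by (subst nekr_h.simps) linarith
qed

lemma dd_margin_nekrasov_scaling:
  fixes A :: "nat \<Rightarrow> nat \<Rightarrow> complex" and \<epsilon> :: "nat \<Rightarrow> real"
  assumes diag: "\<forall>j<n. A j j \<noteq> 0" and i: "i < n"
  shows "dd_margin A n (\<lambda>j. (nekr_h A n j + \<epsilon> j) / cmod (A j j)) i
         = \<epsilon> i - nekr_w A n \<epsilon> i + nekr_p A n \<epsilon> i"
proof -
  define d where "d j = (nekr_h A n j + \<epsilon> j) / cmod (A j j)" for j
  have split: "{..<n}-{i} = {..<i} \<union> {i<..<n}" using i by auto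
  have off_diag: "(\<Sum>j\<in>{..<n}-{i}. cmod (A i j) * d j) =
     (\<Sum>j<i. cmod (A i j) * d j) + (\<Sum>j\<in>{i<..<n}. cmod (A i j) * d j)"
    unfolding split by (rule sum.union_disjoint) auto
  have lower: "(\<Sum>j<i. cmod (A i j) * d j) =
      (\<Sum>j<i. cmod (A i j) * nekr_h A n j / cmod (A j j)) + nekr_w A n \<epsilon> i"
    unfolding nekr_w_def d_def by (simp add: sum.distrib[symmetric] distrib_left add_divide_distrib)
  have upper: "(\<Sum>j\<in>{i<..<n}. cmod (A i j) * d j) = (\<Sum>j\<in>{i<..<n}. cmod (A i j)) - nekr_p A n \<epsilon> i"
    unfolding nekr_p_def sum_subtractf[symmetric] using diag
    by (intro sum.cong) (auto simp: d_def field_simps)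
  have "cmod (A i i) * d i = nekr_h A n i + \<epsilon> i" using diag i by (simp add: d_def)
  with off_diag lower upper show ?thesis
    unfolding dd_margin_def d_def[symmetric] by (subst (asm) nekr_h.simps) linarith
qed

lemma nekr_p_nonneg:
  assumes "\<forall>j. i < j \<and> j < n \<longrightarrow> \<epsilon> j \<le> cmod (A j j) - nekr_h A n j"
  shows "0 \<le> nekr_p A n \<epsilon> i"
  unfolding nekr_p_def using assms by (intro sum_nonneg) auto

lemma cond_C1_pos:
  assumes "nekrasov A n" and C1: "cond_C1 A n \<epsilon>" and i: "i < n"
  shows "0 < \<epsilon> i - nekr_w A n \<epsilon> i + nekr_p A n \<epsilon> i" and "0 < nekr_h A n i + \<epsilon> i"
proof -
  have "0 \<le> nekr_p A n \<epsilon> i"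
    using C1 by (intro nekr_p_nonneg) (auto simp: cond_C1_def)
  moreover have "nekr_w A n \<epsilon> i < \<epsilon> i"
    using C1 i by (cases "i = 0") (auto simp: cond_C1_def nekr_w_def)
  ultimately show "0 < \<epsilon> i - nekr_w A n \<epsilon> i + nekr_p A n \<epsilon> i" by linarith
  have "0 < \<epsilon> i" using C1 i by (cases "i = 0") (auto simp: cond_C1_def)
  then show "0 < nekr_h A n i + \<epsilon> i" using nekr_h_nonneg[of A n i] by linarith
qed

lemma upper_entry_nonzero_below_c2_index:
  assumes "i < c2_index A n"
  obtains j where "i < j" "j < n" "A i j \<noteq> 0"
  using not_less_Least[of i "\<lambda>k. \<forall>j. k < j \<and> j < n \<longrightarrow> A k j = 0"] assms
  unfolding c2_index_def by auto

lemma cond_C2_pos: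
  assumes nekr: "nekrasov A n" and C2: "cond_C2 A n \<epsilon>" and i: "i < n"
  shows "0 < \<epsilon> i - nekr_w A n \<epsilon> i + nekr_p A n \<epsilon> i" and "0 < nekr_h A n i + \<epsilon> i"
proof -
  define k where "k = c2_index A n"
  have eps_zero: "\<forall>j<k. \<epsilon> j = 0"
    and eps_k: "\<forall>j. k \<le> j \<and> j < n \<longrightarrow> 0 < \<epsilon> j \<and> \<epsilon> j < cmod (A j j) - nekr_h A n j \<and>
        \<epsilon> j > (\<Sum>l\<in>{k..<j}. cmod (A j l) * \<epsilon> l / cmod (A l l))"
    using C2 unfolding cond_C2_def k_def Let_def by auto
  have gap: "\<epsilon> j < cmod (A j j) - nekr_h A n j" if "j < n" for j
    using nekr eps_zero eps_k that unfolding nekrasov_def by (cases "j < k") auto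
  have "0 < \<epsilon> i - nekr_w A n \<epsilon> i + nekr_p A n \<epsilon> i \<and> 0 < nekr_h A n i + \<epsilon> i"
  proof (cases "i < k")
    case True
    then obtain j where j: "i < j" "j < n" "A i j \<noteq> 0"
      unfolding k_def by (rule upper_entry_nonzero_below_c2_index)
    have diag: "A l l \<noteq> 0" if "l < n" for l using nekr that unfolding nekrasov_def by auto
    have slack: "0 < cmod (A l l) - nekr_h A n l - \<epsilon> l" if "l < n" for l
      using gap[OF that] by simp
    have "0 \<le> cmod (A i l) * (cmod (A l l) - nekr_h A n l - \<epsilon> l) / cmod (A l l)"
      if "l \<in> {i<..<n}" for l
      using slack[of l] that by (auto intro!: divide_nonneg_nonneg mult_nonneg_nonneg)
    moreover have "0 < cmod (A i j) * (cmod (A j j) - nekr_h A n j - \<epsilon> j) / cmod (A j j)"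
      using slack[OF j(2)] diag[OF j(2)] j(3) by (auto intro!: divide_pos_pos mult_pos_pos)
    ultimately have "0 < nekr_p A n \<epsilon> i" unfolding nekr_p_def
      using j by (intro sum_pos2[of _ j]) auto
    moreover have "nekr_w A n \<epsilon> i = 0" unfolding nekr_w_def using eps_zero True by simp
    moreover have "0 < nekr_h A n i" using j by (rule nekr_h_pos_if_upper_entry_nonzero)
    ultimately show ?thesis using eps_zero True by simp
  next
    case False
    have split: "{..<i} = {..<k} \<union> {k..<i}" using False by auto
    have "nekr_w A n \<epsilon> i = (\<Sum>l\<in>{k..<i}. cmod (A i l) * \<epsilon> l / cmod (A l l))"
      unfolding nekr_w_def split using eps_zero by (subst sum.union_disjoint) auto
    then have "nekr_w A n \<epsilon> i < \<epsilon> i" using eps_k False i by auto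
    moreover have "0 \<le> nekr_p A n \<epsilon> i" using gap by (intro nekr_p_nonneg) (auto intro: less_imp_le)
    moreover have "0 < \<epsilon> i" using eps_k False i by auto
    ultimately show ?thesis using nekr_h_nonneg[of A n i] by linarith
  qed
  then show "0 < \<epsilon> i - nekr_w A n \<epsilon> i + nekr_p A n \<epsilon> i" and "0 < nekr_h A n i + \<epsilon> i"
    by auto
qed

theorem theorem3p2:
  fixes A :: "nat \<Rightarrow> nat \<Rightarrow> complex" and n :: nat and \<epsilon> :: "nat \<Rightarrow> real"
  assumes "n \<ge> 1"
    and "nekrasov A n"
    and "cond_C1 A n \<epsilon> \<or> cond_C2 A n \<epsilon>"
  shows "(\<forall>i<n. \<epsilon> i - nekr_w A n \<epsilon> i + nekr_p A n \<epsilon> i > 0) \<and>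
         (\<exists>B. is_inverse A B n \<and>
            inf_norm B n \<le>
              Max ((\<lambda>i. (nekr_h A n i + \<epsilon> i) / cmod (A i i)) ` {..<n})
              / Min ((\<lambda>i. \<epsilon> i - nekr_w A n \<epsilon> i + nekr_p A n \<epsilon> i) ` {..<n}))"
proof -
  define d where "d = (\<lambda>j. (nekr_h A n j + \<epsilon> j) / cmod (A j j))"
  have n: "0 < n" using assms(1) by simp
  have diag: "\<forall>j<n. A j j \<noteq> 0" using assms(2) unfolding nekrasov_def by auto
  have pos: "0 < \<epsilon> i - nekr_w A n \<epsilon> i + nekr_p A n \<epsilon> i \<and> 0 < nekr_h A n i + \<epsilon> i"
    if "i < n" for i
    using assms(3) cond_C1_pos[OF assms(2) _ that] cond_C2_pos[OF assms(2) _ that] by blast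
  have margin: "dd_margin A n d i = \<epsilon> i - nekr_w A n \<epsilon> i + nekr_p A n \<epsilon> i" if "i < n" for i
    unfolding d_def using diag that by (rule dd_margin_nekrasov_scaling)
  have d_pos: "\<forall>i<n. d i > 0" using pos diag by (auto simp: d_def)
  have margin_pos: "\<forall>i<n. 0 < dd_margin A n d i" using pos margin by simp
  obtain B where B: "is_inverse A B n"
    and bound: "inf_norm B n \<le> Max (d ` {..<n}) / Min (dd_margin A n d ` {..<n})"
    using scaled_dd_inverse_inf_norm_bound[OF n d_pos margin_pos] by blast
  have "dd_margin A n d ` {..<n} = (\<lambda>i. \<epsilon> i - nekr_w A n \<epsilon> i + nekr_p A n \<epsilon> i) ` {..<n}"
    using margin by (intro image_cong) auto
  with bound B pos show ?thesis unfolding d_def by auto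
qed

end
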